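(* Let $0<q<1$ and $\alpha,\gamma,z\in\mathbb{C}$. Then, as an identity of meromorphic functions in $z$, \[ \mathfrak{F}\!\left(\left\{\frac{q^{\frac12(\alpha+\gamma+k)-\frac34}\,(q^{\gamma-\alpha+k};q^2)_\infty\,\sqrt{z}}{(q^{\gamma-\alpha+k+1};q^2)_\infty\,\big(1-(1-z)q^{\gamma+k-1}\big)}\right\}_{k=1}^\infty\right) =\frac{(q^\gamma;q)_\infty}{((1-z)q^\gamma;q)_\infty}\,{}_1\phi_1(q^\alpha;q^\gamma;q,-q^\gamma z). \]
   Context: Complex powers of $q$ are $q^s=e^{s\log q}$. $(a;q)_\infty=\prod_{j\ge0}(1-aq^j)$, $(a;q)_k=\prod_{j=0}^{k-1}(1-aq^j)$, and ${}_1\phi_1(a;b;q,z)=\sum_{k\ge0}(-1)^kq^{k(k-1)/2}\frac{(a;q)_k}{(b;q)_k(q;q)_k}z^k$. For a complex sequence $x=\{x_k\}_{k=1}^{\infty}$ with $\sum_{k\ge1}|x_kx_{k+1}|<\infty$, \[ \mathfrak{F}(x)=1+\sum_{m=1}^\infty(-1)^m\sum_{k_1=1}^\infty\ \sum_{k_2=k_1+2}^\infty\cdots\sum_{k_m=k_{m-1}+2}^\infty x_{k_1}x_{k_1+1}\cdots x_{k_m}x_{k_m+1}. \] Since $\mathfrak{F}$ depends only on products $x_kx_{k+1}$, the branch of $\sqrt z$ is irrelevant. *)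

theory Defs
  imports "HOL-Analysis.Analysis"
begin

definition qpow :: "real \<Rightarrow> complex \<Rightarrow> complex" where
  "qpow q s = exp (s * complex_of_real (ln q))"

definition qpoch :: "complex \<Rightarrow> real \<Rightarrow> nat \<Rightarrow> complex" where
  "qpoch a q k = (\<Prod>j<k. 1 - a * complex_of_real q ^ j)"

definition qpoch_inf :: "complex \<Rightarrow> real \<Rightarrow> complex" where
  "qpoch_inf a q = (\<Prod>j. 1 - a * complex_of_real q ^ j)"

definition phi11 :: "complex \<Rightarrow> complex \<Rightarrow> real \<Rightarrow> complex \<Rightarrow> complex" where
  "phi11 a b q z = (\<Sum>k. (-1) ^ k * complex_of_real q ^ (k * (k - 1) div 2)
      * qpoch a q k / (qpoch b q k * qpoch (complex_of_real q) q k) * z ^ k)"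

definition gapped :: "nat \<Rightarrow> nat list set" where
  "gapped m = {ks. length ks = m \<and> (\<forall>i<m. 1 \<le> ks ! i)
                 \<and> (\<forall>i. i + 1 < m \<longrightarrow> ks ! i + 2 \<le> ks ! (i + 1))}"

definition frakF :: "(nat \<Rightarrow> complex) \<Rightarrow> complex" where
  "frakF x = 1 + (\<Sum>m. (-1) ^ Suc m *
      infsum (\<lambda>ks. \<Prod>i<Suc m. x (ks ! i) * x (ks ! i + 1)) (gapped (Suc m)))"

end

theory Submission
  imports Defs
begin

text \<open>Write \<open>u\<^sub>n\<close> for \<open>\<frak>F\<close> applied to the shifted sequence \<open>x\<^sub>n\<^sub>+\<^sub>1, x\<^sub>n\<^sub>+\<^sub>2, \<dots>\<close>.
  Splitting the gapped index tuples according to whether \<open>k\<^sub>1 = 1\<close> gives the three-term recurrence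
  \<open>u\<^sub>n = u\<^sub>n\<^sub>+\<^sub>1 - x\<^sub>n\<^sub>+\<^sub>1 x\<^sub>n\<^sub>+\<^sub>2 u\<^sub>n\<^sub>+\<^sub>2\<close>, and \<open>u\<^sub>n \<rightarrow> 1\<close>.
  The right-hand side with \<open>q\<^sup>\<gamma>\<close> replaced by \<open>q\<^sup>\<gamma>\<^sup>+\<^sup>n\<close> satisfies the same recurrence, by a
  contiguous relation of \<open>\<^sub>1\<phi>\<^sub>1\<close> in its second parameter, because the product
  \<open>x\<^sub>n\<^sub>+\<^sub>1 x\<^sub>n\<^sub>+\<^sub>2\<close> telescopes to exactly the coefficient of that relation; it also tends to 1.
  As the coefficients tend to 0, two solutions of the recurrence with the same limit coincide.\<close>

section \<open>Gapped index tuples and the functional \<open>\<frak>F\<close>\<close>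

lemma gapped_iff:
  "ks \<in> gapped m \<longleftrightarrow>
     length ks = m \<and> (\<forall>k\<in>set ks. 1 \<le> k) \<and> sorted_wrt (\<lambda>i j. i + 2 \<le> j) ks"
proof -
  have "transp (\<lambda>i j :: nat. i + 2 \<le> j)" by (auto intro: transpI)
  then show ?thesis
    unfolding gapped_def by (auto simp: sorted_wrt_iff_nth_Suc_transp all_set_conv_all_nth)
qed

lemma gapped_0: "gapped 0 = {[]}"
  by (auto simp: gapped_iff)

lemma gapped_disjoint: "m \<noteq> m' \<Longrightarrow> gapped m \<inter> gapped m' = {}"
  by (auto simp: gapped_iff)

lemma gapped_strict_sorted: "ks \<in> gapped m \<Longrightarrow> sorted_wrt (<) ks"
  by (rule sorted_wrt_mono_rel[of _ "\<lambda>i j. i + 2 \<le> j"]) (auto simp: gapped_iff)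

lemma inj_on_set_gapped: "inj_on set (\<Union>m. gapped m)"
proof (rule inj_onI)
  fix xs ys assume "xs \<in> (\<Union>m. gapped m)" "ys \<in> (\<Union>m. gapped m)" "set xs = set ys"
  then show "xs = ys"
    using gapped_strict_sorted strict_sorted_iff sorted_distinct_set_unique by blast
qed

lemma Cons_1_shift_gapped: "ks \<in> gapped m \<Longrightarrow> 1 # map (\<lambda>k. k + 2) ks \<in> gapped (Suc m)"
  by (auto simp: gapped_iff sorted_wrt_map)

lemma map_shift_gapped: "ks \<in> gapped m \<Longrightarrow> map (\<lambda>k. k + 1) ks \<in> gapped m"
  by (auto simp: gapped_iff sorted_wrt_map)

lemma gapped_Suc:
  "gapped (Suc m) = (\<lambda>ks. 1 # map (\<lambda>k. k + 2) ks) ` gapped m \<union> map (\<lambda>k. k + 1) ` gapped (Suc m)"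
proof (intro equalityI subsetI)
  fix ks assume ks: "ks \<in> gapped (Suc m)"
  then obtain k rest where ks_eq: "ks = k # rest" and k: "1 \<le> k"
    and rest: "\<forall>r\<in>set rest. k + 2 \<le> r \<and> 1 \<le> r" "length rest = m"
      "sorted_wrt (\<lambda>i j. i + 2 \<le> j) rest"
    by (cases ks) (auto simp: gapped_iff)
  show "ks \<in> (\<lambda>ks. 1 # map (\<lambda>k. k + 2) ks) ` gapped m \<union> map (\<lambda>k. k + 1) ` gapped (Suc m)"
  proof (cases "k = 1")
    case True
    have "\<forall>r\<in>set rest. 3 \<le> r"
      using rest True by auto
    then have "ks = 1 # map (\<lambda>k. k + 2) (map (\<lambda>k. k - 2) rest)"
      unfolding ks_eq True by (induction rest) auto
    moreover have "map (\<lambda>k. k - 2) rest \<in> gapped m"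
      using rest True unfolding gapped_iff
      by (auto simp: sorted_wrt_map elim!: sorted_wrt_mono_rel[rotated])
    ultimately show ?thesis by (intro UnI1 image_eqI)
  next
    case False
    have "\<forall>r\<in>set ks. 2 \<le> r"
      using k rest False by (auto simp: ks_eq)
    then have "ks = map (\<lambda>k. k + 1) (map (\<lambda>k. k - 1) ks)"
      by (induction ks) auto
    moreover have "map (\<lambda>k. k - 1) ks \<in> gapped (Suc m)"
      using ks k rest False unfolding gapped_iff ks_eq
      by (auto simp: sorted_wrt_map elim!: sorted_wrt_mono_rel[rotated])
    ultimately show ?thesis by (intro UnI2 image_eqI)
  qed
qed (use Cons_1_shift_gapped map_shift_gapped in blast)

lemma gapped_Suc_disjoint:
  "(\<lambda>ks. 1 # map (\<lambda>k. k + 2) ks) ` gapped m \<inter> map (\<lambda>k. k + 1) ` gapped (Suc m) = {}"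
  by (auto simp: gapped_iff)

definition gapped_weight :: "(nat \<Rightarrow> complex) \<Rightarrow> nat list \<Rightarrow> complex" where
  "gapped_weight x ks = (\<Prod>i<length ks. x (ks ! i) * x (ks ! i + 1))"

definition gapped_sum :: "(nat \<Rightarrow> complex) \<Rightarrow> nat \<Rightarrow> complex" where
  "gapped_sum x m = (\<Sum>\<^sub>\<infinity>ks\<in>gapped m. gapped_weight x ks)"

abbreviation adjacent_summable :: "(nat \<Rightarrow> complex) \<Rightarrow> bool" where
  "adjacent_summable x \<equiv> summable (\<lambda>k. norm (x k * x (k + 1)))"

lemma frakF_eq_gapped_sum: "frakF x = 1 + (\<Sum>m. (-1) ^ Suc m * gapped_sum x (Suc m))"
proof -
  have "gapped_sum x (Suc m) = (\<Sum>\<^sub>\<infinity>ks\<in>gapped (Suc m). \<Prod>i<Suc m. x (ks ! i) * x (ks ! i + 1))" for m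
    unfolding gapped_sum_def gapped_weight_def by (intro infsum_cong) (simp add: gapped_iff)
  then show ?thesis by (simp add: frakF_def)
qed

lemma gapped_sum_0: "gapped_sum x 0 = 1"
  by (simp add: gapped_sum_def gapped_0 gapped_weight_def)

lemma gapped_weight_Cons: "gapped_weight x (k # ks) = x k * x (k + 1) * gapped_weight x ks"
  unfolding gapped_weight_def length_Cons prod.lessThan_Suc_shift by simp

lemma gapped_weight_shift: "gapped_weight x (map (\<lambda>k. k + n) ks) = gapped_weight (\<lambda>k. x (k + n)) ks"
  by (simp add: gapped_weight_def ac_simps)

lemma sum_gapped_prod_le_exp:
  fixes a :: "nat \<Rightarrow> real"
  assumes "finite L" "L \<subseteq> (\<Union>m. gapped m)" "\<And>k. 0 \<le> a k" "summable a"
  shows "(\<Sum>ks\<in>L. \<Prod>i<length ks. a (ks ! i)) \<le> exp (suminf a)"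
proof -
  define N where "N = Max (insert 0 (\<Union>ks\<in>L. set ks))"
  have sets: "set ` L \<subseteq> Pow {..N}"
    unfolding N_def using assms(1) by (auto intro: Max_ge)
  have "(\<Prod>i<length ks. a (ks ! i)) = (\<Prod>k\<in>set ks. a k)" if "ks \<in> L" for ks
  proof -
    have "distinct ks"
      using that assms(2) gapped_strict_sorted strict_sorted_iff by blast
    then have "inj_on (\<lambda>i. ks ! i) {..<length ks}"
      by (simp add: inj_on_def nth_eq_iff_index_eq)
    moreover have "set ks = (\<lambda>i. ks ! i) ` {..<length ks}"
      by (auto simp: set_conv_nth)
    ultimately show ?thesis by (simp add: prod.reindex)
  qed
  then have "(\<Sum>ks\<in>L. \<Prod>i<length ks. a (ks ! i)) = (\<Sum>S\<in>set ` L. \<Prod>k\<in>S. a k)"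
    using inj_on_subset[OF inj_on_set_gapped assms(2)] by (simp add: sum.reindex)
  also have "\<dots> \<le> (\<Sum>S\<in>Pow {..N}. \<Prod>k\<in>S. a k)"
    using sets by (intro sum_mono2) (auto intro: prod_nonneg assms(3))
  also have "\<dots> = (\<Prod>k\<le>N. a k + 1)"
    by (subst prod_add) auto
  also have "\<dots> \<le> (\<Prod>k\<le>N. exp (a k))"
    using assms(3) by (intro prod_mono) (auto simp: add.commute exp_ge_add_one_self)
  also have "\<dots> = exp (\<Sum>k\<le>N. a k)"
    by (simp add: exp_sum)
  also have "\<dots> \<le> exp (suminf a)"
    using assms by (simp add: sum_le_suminf)
  finally show ?thesis .
qed

lemma norm_gapped_weight_summable:
  assumes "adjacent_summable x" "B \<subseteq> (\<Union>m. gapped m)"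
  shows "(\<lambda>ks. norm (gapped_weight x ks)) summable_on B"
    and "(\<Sum>\<^sub>\<infinity>ks\<in>B. norm (gapped_weight x ks)) \<le> exp (\<Sum>k. norm (x k * x (k + 1)))"
proof -
  have finite_sums: "(\<Sum>ks\<in>F. norm (gapped_weight x ks)) \<le> exp (\<Sum>k. norm (x k * x (k + 1)))"
    if "finite F" "F \<subseteq> B" for F
    using sum_gapped_prod_le_exp[of F "\<lambda>k. norm (x k * x (k + 1))"] that assms
    by (simp add: gapped_weight_def prod_norm)
  show summable: "(\<lambda>ks. norm (gapped_weight x ks)) summable_on B"
    by (rule nonneg_bdd_above_summable_on) (auto intro!: bdd_aboveI finite_sums)
  show "(\<Sum>\<^sub>\<infinity>ks\<in>B. norm (gapped_weight x ks)) \<le> exp (\<Sum>k. norm (x k * x (k + 1)))"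
    by (rule infsum_le_finite_sums[OF summable finite_sums])
qed

lemma gapped_weight_summable:
  "adjacent_summable x \<Longrightarrow> gapped_weight x summable_on gapped m"
  by (rule abs_summable_summable, rule norm_gapped_weight_summable) auto

lemma sum_norm_gapped_sum_le:
  assumes "adjacent_summable x"
  shows "(\<Sum>m<M. norm (gapped_sum x m)) \<le> exp (\<Sum>k. norm (x k * x (k + 1)))"
proof -
  have "(\<Sum>m<M. norm (gapped_sum x m)) \<le> (\<Sum>m<M. \<Sum>\<^sub>\<infinity>ks\<in>gapped m. norm (gapped_weight x ks))"
    unfolding gapped_sum_def
    by (intro sum_mono norm_infsum_bound norm_gapped_weight_summable assms) auto
  also have "\<dots> = (\<Sum>\<^sub>\<infinity>ks\<in>(\<Union>m<M. gapped m). norm (gapped_weight x ks))"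
    using gapped_disjoint
    by (intro sum_infsum norm_gapped_weight_summable assms) auto
  also have "\<dots> \<le> exp (\<Sum>k. norm (x k * x (k + 1)))"
    by (intro norm_gapped_weight_summable assms) auto
  finally show ?thesis .
qed

lemma summable_norm_gapped_sum:
  "adjacent_summable x \<Longrightarrow> summable (\<lambda>m. norm (gapped_sum x m))"
  by (rule summableI_nonneg_bounded[OF _ sum_norm_gapped_sum_le]) auto

lemma norm_frakF_minus_1_le:
  assumes "adjacent_summable x"
  shows "norm (frakF x - 1) \<le> exp (\<Sum>k. norm (x k * x (k + 1))) - 1"
proof -
  have summable: "summable (\<lambda>m. norm (gapped_sum x (Suc m)))"
    using summable_norm_gapped_sum[OF assms] by (subst summable_Suc_iff)
  have "norm (frakF x - 1) = norm (\<Sum>m. (-1) ^ Suc m * gapped_sum x (Suc m))"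
    by (simp add: frakF_eq_gapped_sum)
  also have "\<dots> \<le> (\<Sum>m. norm ((-1) ^ Suc m * gapped_sum x (Suc m)))"
    by (rule summable_norm) (simp add: norm_mult norm_power summable)
  also have "\<dots> \<le> exp (\<Sum>k. norm (x k * x (k + 1))) - 1"
  proof (rule suminf_le_const)
    fix n
    have "(\<Sum>m<Suc n. norm (gapped_sum x m)) = 1 + (\<Sum>m<n. norm (gapped_sum x (Suc m)))"
      by (subst sum.lessThan_Suc_shift) (simp add: gapped_sum_0)
    then show "(\<Sum>m<n. norm ((-1) ^ Suc m * gapped_sum x (Suc m))) \<le> exp (\<Sum>k. norm (x k * x (k + 1))) - 1"
      using sum_norm_gapped_sum_le[OF assms, of "Suc n"] by (simp add: norm_mult norm_power)
  qed (simp add: norm_mult norm_power summable)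
  finally show ?thesis .
qed

lemma adjacent_summable_shift:
  assumes "adjacent_summable x"
  shows "adjacent_summable (\<lambda>k. x (k + n))"
  using summable_ignore_initial_segment[OF assms, of n] by (simp add: add.assoc add.commute[of 1])

lemma gapped_sum_Suc:
  assumes "adjacent_summable x"
  shows "gapped_sum x (Suc m) = x 1 * x 2 * gapped_sum (\<lambda>k. x (k + 2)) m + gapped_sum (\<lambda>k. x (k + 1)) (Suc m)"
proof -
  let ?A = "(\<lambda>ks. 1 # map (\<lambda>k. k + 2) ks) ` gapped m" and ?B = "map (\<lambda>k. k + 1) ` gapped (Suc m)"
  have subsets: "?A \<subseteq> gapped (Suc m)" "?B \<subseteq> gapped (Suc m)"
    using Un_upper1[of ?A ?B] Un_upper2[of ?B ?A] unfolding gapped_Suc[symmetric] .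
  have inj_on_first: "inj_on (\<lambda>ks. 1 # map (\<lambda>k. k + 2) ks) (gapped m)"
    and inj_on_second: "inj_on (map (\<lambda>k. k + 1)) (gapped (Suc m))"
    by (auto simp: inj_on_def)
  have summable: "gapped_weight x summable_on ?A" "gapped_weight x summable_on ?B"
    using summable_on_subset_banach[OF gapped_weight_summable[OF assms] subsets(1)]
      summable_on_subset_banach[OF gapped_weight_summable[OF assms] subsets(2)] .
  have "gapped_sum x (Suc m)
      = (\<Sum>\<^sub>\<infinity>ks\<in>?A. gapped_weight x ks) + (\<Sum>\<^sub>\<infinity>ks\<in>?B. gapped_weight x ks)"
    unfolding gapped_sum_def
    by (subst gapped_Suc, rule infsum_Un_disjoint[OF summable gapped_Suc_disjoint])
  also have "\<dots> = x 1 * x 2 * gapped_sum (\<lambda>k. x (k + 2)) m + gapped_sum (\<lambda>k. x (k + 1)) (Suc m)"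
    unfolding gapped_sum_def infsum_reindex[OF inj_on_first] infsum_reindex[OF inj_on_second]
      comp_def gapped_weight_Cons gapped_weight_shift
    by (simp add: infsum_cmult_right' numeral_2_eq_2)
  finally show ?thesis .
qed

lemma frakF_recurrence:
  assumes "adjacent_summable x"
  shows "frakF x = frakF (\<lambda>k. x (k + 1)) - x 1 * x 2 * frakF (\<lambda>k. x (k + 2))"
proof -
  define x1 where "x1 = (\<lambda>k. x (k + 1))"
  define x2 where "x2 = (\<lambda>k. x (k + 2))"
  have alternating_summable: "summable (\<lambda>m. (-1) ^ m * gapped_sum y m)" if "adjacent_summable y" for y
    by (rule summable_norm_cancel) (simp add: norm_mult norm_power summable_norm_gapped_sum[OF that])
  have s1: "summable (\<lambda>m. (-1) ^ Suc m * gapped_sum x1 (Suc m))"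
    using alternating_summable[OF adjacent_summable_shift[OF assms, of 1]] unfolding x1_def
    by (subst summable_Suc_iff[where f="\<lambda>m. (-1) ^ m * gapped_sum _ m"])
  have s2: "summable (\<lambda>m. (-1) ^ m * gapped_sum x2 m)"
    using alternating_summable[OF adjacent_summable_shift[OF assms, of 2]] unfolding x2_def .
  have frakF_x2: "frakF x2 = (\<Sum>m. (-1) ^ m * gapped_sum x2 m)"
    using suminf_split_head[OF s2] by (simp add: frakF_eq_gapped_sum gapped_sum_0)
  have "(\<Sum>m. (-1) ^ Suc m * gapped_sum x (Suc m))
      = (\<Sum>m. - (x 1 * x 2) * ((-1) ^ m * gapped_sum x2 m) + (-1) ^ Suc m * gapped_sum x1 (Suc m))"
    using gapped_sum_Suc[OF assms] unfolding x1_def x2_def by (simp add: algebra_simps)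
  also have "\<dots> = (\<Sum>m. - (x 1 * x 2) * ((-1) ^ m * gapped_sum x2 m))
                   + (\<Sum>m. (-1) ^ Suc m * gapped_sum x1 (Suc m))"
    by (rule suminf_add[OF summable_mult[OF s2] s1, symmetric])
  also have "(\<Sum>m. - (x 1 * x 2) * ((-1) ^ m * gapped_sum x2 m))
             = - (x 1 * x 2) * (\<Sum>m. (-1) ^ m * gapped_sum x2 m)"
    by (rule suminf_mult[OF s2])
  finally show ?thesis
    unfolding x1_def[symmetric] x2_def[symmetric] frakF_eq_gapped_sum[of x] frakF_eq_gapped_sum[of x1]
      frakF_x2 by simp
qed

lemma frakF_shift_tendsto_1:
  assumes "adjacent_summable x"
  shows "(\<lambda>n. frakF (\<lambda>k. x (k + n))) \<longlonglongrightarrow> 1"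
proof -
  define a where "a = (\<lambda>k. norm (x k * x (k + 1)))"
  have summable: "summable a"
    using assms by (simp add: a_def)
  have "(\<lambda>n. \<Sum>k. a (k + n)) \<longlonglongrightarrow> suminf a - suminf a"
    unfolding suminf_minus_initial_segment[OF summable]
    by (intro tendsto_diff tendsto_const summable_LIMSEQ summable)
  then have "(\<lambda>n. exp (\<Sum>k. a (k + n)) - 1) \<longlonglongrightarrow> exp 0 - 1"
    by (intro tendsto_diff tendsto_exp tendsto_const) simp
  then have bound_tendsto: "(\<lambda>n. exp (\<Sum>k. a (k + n)) - 1) \<longlonglongrightarrow> 0"
    by simp
  have "norm (frakF (\<lambda>k. x (k + n)) - 1) \<le> exp (\<Sum>k. a (k + n)) - 1" for n
    using norm_frakF_minus_1_le[OF adjacent_summable_shift[OF assms, of n]]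
    by (simp add: a_def ac_simps)
  then have "(\<lambda>n. frakF (\<lambda>k. x (k + n)) - 1) \<longlonglongrightarrow> 0"
    by (intro Lim_null_comparison[OF _ bound_tendsto] always_eventually allI)
  then show ?thesis
    by (simp add: LIM_zero_iff)
qed

section \<open>Three-term recurrences\<close>

lemma backward_recurrence_eventually_zero:
  fixes W c :: "nat \<Rightarrow> 'a::real_normed_field"
  assumes rec: "\<And>n. W n = c n * W (Suc n)" and "c \<longlonglongrightarrow> 0" and "Bseq W"
  shows "eventually (\<lambda>n. W n = 0) sequentially"
proof -
  obtain B where B: "\<And>n. norm (W n) \<le> B"
    using \<open>Bseq W\<close> by (auto simp: Bseq_def)
  have "(\<lambda>n. norm (c n)) \<longlonglongrightarrow> 0"
    using \<open>c \<longlonglongrightarrow> 0\<close> by (simp add: tendsto_norm_zero)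
  then have "eventually (\<lambda>n. norm (c n) < 1/2) sequentially"
    by (rule order_tendstoD) simp
  then obtain N where N: "\<And>n. n \<ge> N \<Longrightarrow> norm (c n) \<le> 1/2"
    unfolding eventually_sequentially by (meson less_imp_le)
  have geometric: "norm (W n) \<le> (1/2) ^ k * B" if "n \<ge> N" for n k
    using that
  proof (induction k arbitrary: n)
    case (Suc k)
    have "norm (W n) = norm (c n) * norm (W (Suc n))"
      by (subst rec) (simp add: norm_mult)
    also have "\<dots> \<le> 1/2 * ((1/2) ^ k * B)"
      using Suc N by (intro mult_mono) auto
    finally show ?case by simp
  qed (use B in simp)
  have "(\<lambda>k. (1/2::real) ^ k * B) \<longlonglongrightarrow> 0"
    by (intro tendsto_mult_left_zero LIMSEQ_power_zero) simp
  then have "norm (W n) \<le> 0" if "n \<ge> N" for n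
    using geometric[OF that] by (intro LIMSEQ_le_const) auto
  then show ?thesis
    unfolding eventually_sequentially by auto
qed

lemma three_term_recurrence_backward:
  fixes u v c :: "nat \<Rightarrow> 'a::ring"
  assumes "\<And>n. u n = u (Suc n) - c n * u (Suc (Suc n))"
    and "\<And>n. v n = v (Suc n) - c n * v (Suc (Suc n))"
    and "eventually (\<lambda>n. u n = v n) sequentially"
  shows "u n = v n"
proof -
  obtain K where K: "\<And>n. n \<ge> K \<Longrightarrow> u n = v n"
    using assms(3) unfolding eventually_sequentially by blast
  have "\<forall>n. K \<le> n + d \<longrightarrow> u n = v n" for d
  proof (induction d)
    case (Suc d)
    show ?case
    proof (intro allI impI)
      fix n assume "K \<le> n + Suc d"
      then have "u (Suc n) = v (Suc n)" "u (Suc (Suc n)) = v (Suc (Suc n))"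
        using Suc.IH by auto
      then show "u n = v n"
        by (subst assms(1), subst assms(2)) simp
    qed
  qed (use K in simp)
  then show ?thesis
    by (metis le_add2)
qed

text \<open>The Casoratian \<open>W\<close> of two solutions is bounded and satisfies \<open>W n = c n * W (n + 1)\<close>, so it
  vanishes eventually; then the solutions are eventually proportional, and the common limit
  fixes the factor.\<close>
lemma three_term_recurrence_unique:
  fixes u v c :: "nat \<Rightarrow> 'a::real_normed_field"
  assumes ru: "\<And>n. u n = u (Suc n) - c n * u (Suc (Suc n))"
    and rv: "\<And>n. v n = v (Suc n) - c n * v (Suc (Suc n))"
    and "c \<longlonglongrightarrow> 0" and u1: "u \<longlonglongrightarrow> 1" and v1: "v \<longlonglongrightarrow> 1"
  shows "u n = v n"
proof -
  define W where "W n = u n * v (Suc n) - u (Suc n) * v n" for n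
  have "W n = c n * W (Suc n)" for n
    unfolding W_def by (subst ru, subst rv) (simp add: algebra_simps)
  moreover have "W \<longlonglongrightarrow> 1 * 1 - 1 * 1"
    unfolding W_def[abs_def] by (intro tendsto_intros u1 v1 LIMSEQ_Suc)
  ultimately have "eventually (\<lambda>n. W n = 0) sequentially"
    using \<open>c \<longlonglongrightarrow> 0\<close> by (intro backward_recurrence_eventually_zero convergent_imp_Bseq convergentI)
  moreover have "eventually (\<lambda>n. v n \<noteq> 0) sequentially"
    using v1 by (rule tendsto_imp_eventually_ne) simp
  ultimately have "eventually (\<lambda>n. W n = 0 \<and> v n \<noteq> 0) sequentially"
    by (rule eventually_conj)
  then obtain K where K: "\<And>n. n \<ge> K \<Longrightarrow> W n = 0 \<and> v n \<noteq> 0"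
    unfolding eventually_sequentially by blast
  have ratio: "u n / v n = u K / v K" if "n \<ge> K" for n
    using that
  proof (induction n rule: dec_induct)
    case (step n)
    have "u (Suc n) / v (Suc n) = u n / v n"
      using K[of n] K[of "Suc n"] step(1) by (simp add: W_def frac_eq_eq mult.commute)
    then show ?case
      using step by simp
  qed simp
  have "(\<lambda>n. u n / v n) \<longlonglongrightarrow> 1 / 1"
    by (intro tendsto_divide u1 v1) simp
  moreover have "eventually (\<lambda>n. u n / v n = u K / v K) sequentially"
    using ratio unfolding eventually_sequentially by blast
  ultimately have "(\<lambda>n. u K / v K) \<longlonglongrightarrow> 1"
    by (simp add: tendsto_cong)
  then have "u n / v n = 1" if "n \<ge> K" for n
    using ratio[OF that] by (simp add: LIMSEQ_const_iff)
  then have "eventually (\<lambda>n. u n = v n) sequentially"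
    using K unfolding eventually_sequentially by (auto simp: field_simps)
  then show ?thesis
    by (rule three_term_recurrence_backward[of u c v, OF ru rv])
qed

lemma frakF_eq_of_recurrence:
  assumes "adjacent_summable x"
    and rec: "\<And>n. v n = v (Suc n) - x (Suc n) * x (Suc (Suc n)) * v (Suc (Suc n))"
    and "v \<longlonglongrightarrow> 1"
  shows "frakF x = v 0"
proof -
  have shifted: "frakF (\<lambda>k. x (k + n)) = frakF (\<lambda>k. x (k + Suc n))
      - x (Suc n) * x (Suc (Suc n)) * frakF (\<lambda>k. x (k + Suc (Suc n)))" for n
    using frakF_recurrence[OF adjacent_summable_shift[OF assms(1), of n]] by (simp add: ac_simps)
  have "summable (\<lambda>n. x (Suc n) * x (Suc (Suc n)))"
    using summable_norm_cancel[OF adjacent_summable_shift[OF assms(1), of 1]] by simp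
  then have "(\<lambda>n. x (Suc n) * x (Suc (Suc n))) \<longlonglongrightarrow> 0"
    by (rule summable_LIMSEQ_zero)
  then have "frakF (\<lambda>k. x (k + n)) = v n" for n
    by (rule three_term_recurrence_unique[OF shifted rec _ frakF_shift_tendsto_1[OF assms(1)] \<open>v \<longlonglongrightarrow> 1\<close>])
  from this[of 0] show ?thesis
    by simp
qed

section \<open>q-Pochhammer symbols and \<open>\<^sub>1\<phi>\<^sub>1\<close>\<close>

lemma qpoch_Suc: "qpoch a q (Suc n) = qpoch a q n * (1 - a * of_real q ^ n)"
  by (simp add: qpoch_def)

lemma qpoch_Suc_shift: "qpoch a q (Suc n) = (1 - a) * qpoch (a * of_real q) q n"
  unfolding qpoch_def prod.lessThan_Suc_shift by (simp add: ac_simps)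

lemma qpoch_0_left: "qpoch 0 q k = 1"
  by (simp add: qpoch_def)

lemma sum_power_le_geometric:
  fixes q :: real
  assumes "0 \<le> q" "q < 1" "finite A"
  shows "(\<Sum>j\<in>A. q ^ j) \<le> 1 / (1 - q)"
proof -
  have "(\<lambda>j. q ^ j) sums (1 / (1 - q))"
    using assms geometric_sums[of q] by simp
  then show ?thesis
    using sum_le_suminf[of "\<lambda>j. q ^ j" A] assms by (simp add: sums_iff)
qed

lemma norm_qpoch_le:
  assumes "0 \<le> q" "q < 1"
  shows "norm (qpoch a q k) \<le> exp (norm a / (1 - q))"
proof -
  have "norm (qpoch a q k) = (\<Prod>j<k. norm (1 - a * of_real q ^ j))"
    by (simp add: qpoch_def prod_norm)
  also have "\<dots> \<le> (\<Prod>j<k. exp (norm a * q ^ j))"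
  proof (intro prod_mono conjI)
    fix j
    have "norm (1 - a * of_real q ^ j) \<le> 1 + norm a * q ^ j"
      using norm_triangle_ineq4[of 1 "a * of_real q ^ j"] assms by (simp add: norm_mult norm_power)
    also have "\<dots> \<le> exp (norm a * q ^ j)"
      by (simp add: add.commute exp_ge_add_one_self)
    finally show "norm (1 - a * of_real q ^ j) \<le> exp (norm a * q ^ j)" .
  qed simp
  also have "\<dots> = exp (norm a * (\<Sum>j<k. q ^ j))"
    by (simp add: exp_sum sum_distrib_left)
  also have "\<dots> \<le> exp (norm a * (1 / (1 - q)))"
    using sum_power_le_geometric[OF assms] by (intro iffD2[OF exp_le_cancel_iff] mult_left_mono) auto
  finally show ?thesis by simp
qed

lemma norm_qpoch_ge_half:
  assumes "0 \<le> q" "q < 1" "norm b \<le> (1 - q) / 2"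
  shows "1/2 \<le> norm (qpoch b q k)"
proof -
  have "norm b \<le> 1"
    using assms by simp
  have "1/2 \<le> 1 - norm b * (1 / (1 - q))"
    using assms by (simp add: field_simps)
  also have "\<dots> \<le> 1 - norm b * (\<Sum>j<k. q ^ j)"
    using sum_power_le_geometric[OF assms(1,2)] by (intro diff_left_mono mult_left_mono) auto
  also have "\<dots> = 1 - (\<Sum>j<k. norm b * q ^ j)"
    by (simp add: sum_distrib_left)
  also have "\<dots> \<le> (\<Prod>j<k. 1 - norm b * q ^ j)"
    using assms \<open>norm b \<le> 1\<close> by (intro Weierstrass_prod_ineq) (auto simp: mult_le_one power_le_one)
  also have "\<dots> \<le> (\<Prod>j<k. norm (1 - b * of_real q ^ j))"
  proof (intro prod_mono conjI)
    fix j
    show "0 \<le> 1 - norm b * q ^ j"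
      using assms \<open>norm b \<le> 1\<close> by (simp add: mult_le_one power_le_one)
    show "1 - norm b * q ^ j \<le> norm (1 - b * of_real q ^ j)"
      using norm_triangle_ineq2[of 1 "b * of_real q ^ j"] assms by (simp add: norm_mult norm_power)
  qed
  also have "\<dots> = norm (qpoch b q k)"
    by (simp add: qpoch_def prod_norm)
  finally show ?thesis .
qed

lemma convergent_prod_qpoch:
  fixes a :: complex
  assumes "\<bar>q\<bar> < 1"
  shows "convergent_prod (\<lambda>j. 1 - a * of_real q ^ j)"
proof -
  have "summable (\<lambda>j. norm a * \<bar>q\<bar> ^ j)"
    using assms by (intro summable_mult summable_geometric) simp
  then have "summable (\<lambda>j. norm ((1 - a * of_real q ^ j) - 1))"
    by (simp add: norm_mult norm_power)
  then show ?thesis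
    by (intro abs_convergent_prod_imp_convergent_prod summable_imp_abs_convergent_prod)
qed

lemma qpoch_inf_unfold:
  assumes "\<bar>q\<bar> < 1"
  shows "qpoch_inf a q = (1 - a) * qpoch_inf (a * of_real q) q"
proof -
  have "(\<lambda>j. 1 - a * of_real q ^ Suc j) = (\<lambda>j. 1 - (a * of_real q) * of_real q ^ j)"
    by (simp add: ac_simps)
  then have "(\<lambda>j. 1 - a * of_real q ^ Suc j) has_prod qpoch_inf (a * of_real q) q"
    unfolding qpoch_inf_def using convergent_prod_qpoch[OF assms] by (simp add: convergent_prod_has_prod)
  then have "(\<lambda>j. 1 - a * of_real q ^ j) has_prod (qpoch_inf (a * of_real q) q * (1 - a))"
    using has_prod_Suc_imp[of "\<lambda>j. 1 - a * of_real q ^ j"] by simp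
  then show ?thesis
    unfolding qpoch_inf_def by (simp add: has_prod_iff mult.commute)
qed

lemma norm_qpoch_inf_minus_1_le:
  assumes "\<bar>q\<bar> < 1"
  shows "norm (qpoch_inf a q - 1) \<le> exp (norm a / (1 - \<bar>q\<bar>)) - 1"
proof -
  have partial: "norm ((\<Prod>j\<le>n. 1 - a * of_real q ^ j) - 1) \<le> exp (norm a / (1 - \<bar>q\<bar>)) - 1" for n
  proof -
    have "norm ((\<Prod>j\<le>n. 1 + (- a * of_real q ^ j)) - 1) \<le> (\<Prod>j\<le>n. 1 + norm (- a * of_real q ^ j)) - 1"
      by (rule norm_prod_minus1_le_prod_minus1)
    also have "\<dots> \<le> (\<Prod>j\<le>n. exp (norm a * \<bar>q\<bar> ^ j)) - 1"
      by (intro diff_right_mono prod_mono) (auto simp: norm_mult norm_power add.commute)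
    also have "\<dots> = exp (norm a * (\<Sum>j\<le>n. \<bar>q\<bar> ^ j)) - 1"
      by (simp add: exp_sum sum_distrib_left)
    also have "\<dots> \<le> exp (norm a * (1 / (1 - \<bar>q\<bar>))) - 1"
      using sum_power_le_geometric[of "\<bar>q\<bar>"] assms
      by (intro diff_right_mono iffD2[OF exp_le_cancel_iff] mult_left_mono) auto
    finally show ?thesis
      by (simp add: ac_simps)
  qed
  have "(\<lambda>n. norm ((\<Prod>j\<le>n. 1 - a * of_real q ^ j) - 1)) \<longlonglongrightarrow> norm (qpoch_inf a q - 1)"
    unfolding qpoch_inf_def
    by (intro tendsto_norm tendsto_diff tendsto_const convergent_prod_LIMSEQ convergent_prod_qpoch assms)
  then show ?thesis
    by (rule LIMSEQ_le_const2) (use partial in auto)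
qed

lemma qpoch_inf_tendsto_1:
  assumes "\<bar>q\<bar> < 1" "w \<longlonglongrightarrow> 0"
  shows "(\<lambda>n. qpoch_inf (w n) q) \<longlonglongrightarrow> 1"
proof -
  have "(\<lambda>n. norm (w n)) \<longlonglongrightarrow> 0"
    using assms(2) by (simp add: tendsto_norm_zero)
  then have "(\<lambda>n. exp (norm (w n) / (1 - \<bar>q\<bar>)) - 1) \<longlonglongrightarrow> exp (0 / (1 - \<bar>q\<bar>)) - 1"
    by (intro tendsto_diff tendsto_exp tendsto_divide tendsto_const) (use assms in auto)
  then have bound_tendsto: "(\<lambda>n. exp (norm (w n) / (1 - \<bar>q\<bar>)) - 1) \<longlonglongrightarrow> 0"
    by simp
  have "(\<lambda>n. qpoch_inf (w n) q - 1) \<longlonglongrightarrow> 0"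
    by (intro Lim_null_comparison[OF _ bound_tendsto] always_eventually allI norm_qpoch_inf_minus_1_le assms)
  then show ?thesis
    by (simp add: LIM_zero_iff)
qed

definition phi11_term :: "complex \<Rightarrow> complex \<Rightarrow> real \<Rightarrow> complex \<Rightarrow> nat \<Rightarrow> complex" where
  "phi11_term a b q w k = (-1) ^ k * of_real q ^ (k * (k - 1) div 2)
      * qpoch a q k / (qpoch b q k * qpoch (of_real q) q k) * w ^ k"

lemma phi11_eq_suminf: "phi11 a b q w = (\<Sum>k. phi11_term a b q w k)"
  by (simp add: phi11_def phi11_term_def)

lemma phi11_term_0: "phi11_term a b q w 0 = 1"
  by (simp add: phi11_term_def qpoch_def)

lemma triangular_Suc: "Suc k * (Suc k - 1) div 2 = k * (k - 1) div 2 + k"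
proof (cases k)
  case (Suc j)
  then have "Suc k * (Suc k - 1) = k * (k - 1) + k * 2"
    by (simp add: algebra_simps)
  then show ?thesis
    by simp
qed simp

lemma phi11_term_Suc:
  "phi11_term a b q w (Suc k) = phi11_term a b q w k *
     (- (of_real q ^ k) * (1 - a * of_real q ^ k) * w
      * inverse (1 - b * of_real q ^ k) * inverse (1 - of_real q * of_real q ^ k))"
  unfolding phi11_term_def qpoch_Suc triangular_Suc
  by (simp add: divide_inverse inverse_mult_distrib power_add mult_ac)

lemma summable_norm_phi11_term:
  assumes "0 < q" "q < 1"
  shows "summable (\<lambda>k. norm (phi11_term a b q w k))"
proof -
  let ?Q = "complex_of_real q"
  define r where "r k = - (?Q ^ k) * (1 - a * ?Q ^ k) * w
    * inverse (1 - b * ?Q ^ k) * inverse (1 - ?Q * ?Q ^ k)" for k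
  have Q0: "(\<lambda>k. ?Q ^ k) \<longlonglongrightarrow> 0"
    using assms by (intro LIMSEQ_power_zero) simp
  have "r \<longlonglongrightarrow> - 0 * (1 - a * 0) * w * inverse (1 - b * 0) * inverse (1 - ?Q * 0)"
    unfolding r_def by (intro tendsto_intros Q0) auto
  then have "(\<lambda>k. norm (r k)) \<longlonglongrightarrow> 0"
    by (simp add: tendsto_norm_zero)
  then have "eventually (\<lambda>k. norm (r k) < 1/2) sequentially"
    by (rule order_tendstoD) simp
  then obtain N where N: "\<And>k. k \<ge> N \<Longrightarrow> norm (r k) < 1/2"
    unfolding eventually_sequentially by blast
  show ?thesis
  proof (rule summable_ratio_test[of "1/2" N])
    fix k assume "k \<ge> N"
    have "norm (norm (phi11_term a b q w (Suc k))) = norm (phi11_term a b q w k) * norm (r k)"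
      by (simp add: phi11_term_Suc r_def norm_mult)
    also have "\<dots> \<le> 1/2 * norm (norm (phi11_term a b q w k))"
      using N[OF \<open>k \<ge> N\<close>] mult_left_mono[of "norm (r k)" "1/2" "norm (phi11_term a b q w k)"]
      by (simp add: mult.commute)
    finally show "norm (norm (phi11_term a b q w (Suc k))) \<le> 1/2 * norm (norm (phi11_term a b q w k))" .
  qed simp
qed

lemma phi11_sums:
  assumes "0 < q" "q < 1"
  shows "phi11_term a b q w sums phi11 a b q w"
  unfolding phi11_eq_suminf
  by (rule summable_sums[OF summable_norm_cancel[OF summable_norm_phi11_term[OF assms]]])

lemma qpoch_nonzero:
  assumes "\<And>j. j < k \<Longrightarrow> 1 - b * of_real q ^ j \<noteq> 0"
  shows "qpoch b q k \<noteq> 0"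
  using assms by (simp add: qpoch_def)

lemma phi11_term_contiguous:
  fixes a b z :: complex and q :: real
  defines "Q \<equiv> complex_of_real q"
  assumes q: "0 < q" "q < 1" and b: "\<And>j. 1 - b * Q ^ j \<noteq> 0"
  shows "(1 - b) * (1 - b * Q) * phi11_term a b q (- b * z) (Suc m)
     = (1 - b) * (1 - b * Q) * phi11_term a (b * Q) q (- (b * Q) * z) (Suc m)
       + b * z * (1 - b * Q) * phi11_term a (b * Q) q (- (b * Q) * z) m
       - (a - b * Q) * b * z * phi11_term a (b * Q * Q) q (- (b * Q * Q) * z) m"
proof -
  define S where "S = (-1::complex) ^ m"
  define T where "T = Q ^ (m * (m - 1) div 2)"
  define A where "A = qpoch a q m"
  define B where "B = qpoch (b * Q) q m"
  define C where "C = qpoch Q q m"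
  define W where "W = (- b * z) ^ m"
  define R where "R = Q ^ m"
  have Q_power_ne_1: "Q ^ j \<noteq> 1" if "j > 0" for j
  proof -
    have "q ^ j < 1"
      using q that by (simp add: power_less_one_iff)
    then show ?thesis
      unfolding Q_def by (metis of_real_1 of_real_eq_iff of_real_power less_irrefl)
  qed
  have nonzero: "1 - b \<noteq> 0" "1 - b * Q \<noteq> 0" "1 - b * Q * R \<noteq> 0" "1 - Q * R \<noteq> 0"
    using b[of 0] b[of 1] b[of "Suc m"] Q_power_ne_1[of "Suc m"] by (simp_all add: R_def mult.assoc)
  have "B \<noteq> 0"
    unfolding B_def using b by (intro qpoch_nonzero) (simp add: Q_def mult.assoc flip: power_Suc)
  have "C \<noteq> 0"
    unfolding C_def using Q_power_ne_1 by (intro qpoch_nonzero) (simp add: Q_def flip: power_Suc)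
  have W_Q: "(- (b * Q) * z) ^ m = W * R"
    by (simp add: W_def R_def power_mult_distrib[symmetric] algebra_simps)
  have "qpoch b q (Suc m) = (1 - b) * B"
    by (simp add: qpoch_Suc_shift B_def Q_def)
  then have t0: "phi11_term a b q (- b * z) (Suc m)
      = - S * (T * R) * (A * (1 - a * R)) / (((1 - b) * B) * (C * (1 - Q * R))) * (W * (- b * z))"
    unfolding phi11_term_def triangular_Suc Q_def[symmetric]
    by (simp add: S_def T_def A_def C_def W_def R_def Q_def qpoch_Suc power_add)
  have t1: "phi11_term a (b * Q) q (- (b * Q) * z) (Suc m)
      = - S * (T * R) * (A * (1 - a * R)) / ((B * (1 - b * Q * R)) * (C * (1 - Q * R))) * ((W * R) * (- (b * Q) * z))"
    unfolding phi11_term_def triangular_Suc Q_def[symmetric] power_Suc[of "- (b * Q) * z"] W_Q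
    by (simp add: S_def T_def A_def B_def C_def R_def Q_def qpoch_Suc power_add)
  have t1': "phi11_term a (b * Q) q (- (b * Q) * z) m = S * T * A / (B * C) * (W * R)"
    unfolding phi11_term_def Q_def[symmetric] W_Q
    by (simp add: S_def T_def A_def B_def C_def)
  have t2: "phi11_term a (b * Q * Q) q (- (b * Q * Q) * z) m
      = S * T * A / ((B * (1 - b * Q * R) / (1 - b * Q)) * C) * (W * R * R)"
  proof -
    have "(1 - b * Q) * qpoch (b * Q * Q) q m = B * (1 - b * Q * R)"
      using qpoch_Suc_shift[of "b * Q" q m] qpoch_Suc[of "b * Q" q m]
      by (simp add: B_def R_def Q_def)
    then have "qpoch (b * Q * Q) q m = B * (1 - b * Q * R) / (1 - b * Q)"
      using \<open>1 - b * Q \<noteq> 0\<close> by (simp add: field_simps)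
    moreover have "(- (b * Q * Q) * z) ^ m = W * R * R"
      by (simp add: W_def R_def power_mult_distrib[symmetric] algebra_simps)
    ultimately show ?thesis
      unfolding phi11_term_def Q_def[symmetric] by (simp add: S_def T_def A_def C_def)
  qed
  show ?thesis
    unfolding t0 t1 t1' t2 using nonzero \<open>B \<noteq> 0\<close> \<open>C \<noteq> 0\<close> by (simp add: divide_simps) (simp add: algebra_simps)
qed

lemma phi11_contiguous:
  fixes a b z :: complex and q :: real
  defines "Q \<equiv> complex_of_real q"
  assumes q: "0 < q" "q < 1" and b: "\<And>j. 1 - b * Q ^ j \<noteq> 0"
  shows "(1 - b) * (1 - b * Q) * phi11 a b q (- b * z)
     = (1 - (1 - z) * b) * (1 - b * Q) * phi11 a (b * Q) q (- (b * Q) * z)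
       - (a - b * Q) * b * z * phi11 a (b * Q * Q) q (- (b * Q * Q) * z)"
proof -
  define t0 where "t0 = phi11_term a b q (- b * z)"
  define t1 where "t1 = phi11_term a (b * Q) q (- (b * Q) * z)"
  define t2 where "t2 = phi11_term a (b * Q * Q) q (- (b * Q * Q) * z)"
  define c where "c = (1 - b) * (1 - b * Q)"
  define u where "u m = b * z * (1 - b * Q) * t1 m - (a - b * Q) * b * z * t2 m" for m
  have t1_sums: "t1 sums phi11 a (b * Q) q (- (b * Q) * z)"
    unfolding t1_def Q_def by (rule phi11_sums[OF q])
  have shifted_sums: "(\<lambda>k. c * t1 k + (case k of 0 \<Rightarrow> 0 | Suc m \<Rightarrow> u m)) sums
      (c * phi11 a (b * Q) q (- (b * Q) * z)
       + (b * z * (1 - b * Q) * phi11 a (b * Q) q (- (b * Q) * z)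
          - (a - b * Q) * b * z * phi11 a (b * Q * Q) q (- (b * Q * Q) * z)))"
    unfolding u_def t2_def Q_def
    by (intro sums_add sums_mult sums_diff t1_sums[unfolded Q_def] phi11_sums[OF q]
        sums_Suc_imp[where f="\<lambda>k. case k of 0 \<Rightarrow> 0 | Suc m \<Rightarrow> _ m", simplified])
  have termwise: "c * t0 k = c * t1 k + (case k of 0 \<Rightarrow> 0 | Suc m \<Rightarrow> u m)" for k
    using phi11_term_contiguous[OF q, of b a z] b
    by (cases k) (simp_all add: c_def u_def t0_def t1_def t2_def phi11_term_0 Q_def algebra_simps)
  have "(\<lambda>k. c * t0 k) sums (c * phi11 a b q (- b * z))"
    unfolding t0_def by (intro sums_mult phi11_sums[OF q])
  then have "c * phi11 a b q (- b * z) = c * phi11 a (b * Q) q (- (b * Q) * z)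
       + (b * z * (1 - b * Q) * phi11 a (b * Q) q (- (b * Q) * z)
          - (a - b * Q) * b * z * phi11 a (b * Q * Q) q (- (b * Q * Q) * z))"
    unfolding termwise using shifted_sums by (rule sums_unique2)
  then show ?thesis
    unfolding c_def by (simp add: algebra_simps)
qed

lemma norm_phi11_term:
  "norm (phi11_term a b q w k) = \<bar>q\<bar> ^ (k * (k - 1) div 2) * norm (qpoch a q k)
     / (norm (qpoch b q k) * norm (qpoch (of_real q) q k)) * norm w ^ k"
  by (simp add: phi11_term_def norm_mult norm_divide norm_power)

lemma norm_phi11_term_le:
  assumes q: "0 < q" "q < 1" and b: "norm b \<le> (1 - q) / 2" and "k \<ge> 1"
  shows "norm (phi11_term a b q (- b * z) k)
     \<le> norm b * (2 * exp (norm a / (1 - q))) * norm (phi11_term 0 0 q (norm z) k)"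
proof -
  define X where "X = \<bar>q\<bar> ^ (k * (k - 1) div 2) / norm (qpoch (of_real q) q k) * norm z ^ k"
  have "norm b \<le> 1"
    using q b by simp
  have ratio: "norm (qpoch a q k) / norm (qpoch b q k) \<le> 2 * exp (norm a / (1 - q))"
  proof -
    have "norm (qpoch a q k) / norm (qpoch b q k) \<le> exp (norm a / (1 - q)) / (1/2)"
      using norm_qpoch_le[of q a k] norm_qpoch_ge_half[of q b k] q b by (intro frac_le) auto
    then show ?thesis by simp
  qed
  have "norm b ^ k \<le> norm b"
    using \<open>k \<ge> 1\<close> \<open>norm b \<le> 1\<close> by (metis norm_ge_zero power_decreasing power_one_right)
  then have "X * (norm (qpoch a q k) / norm (qpoch b q k)) * norm b ^ k
       \<le> X * (2 * exp (norm a / (1 - q))) * norm b"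
    using ratio by (intro mult_mono mult_left_mono) (auto simp: X_def)
  moreover have "norm (phi11_term a b q (- b * z) k)
      = X * (norm (qpoch a q k) / norm (qpoch b q k)) * norm b ^ k"
    unfolding norm_phi11_term X_def
    by (simp add: norm_mult power_mult_distrib divide_inverse inverse_mult_distrib ac_simps)
  moreover have "norm (phi11_term 0 0 q (norm z) k) = X"
    unfolding norm_phi11_term X_def qpoch_0_left by simp
  ultimately show ?thesis
    by (simp add: ac_simps)
qed

lemma norm_phi11_minus_1_le:
  assumes q: "0 < q" "q < 1" and b: "norm b \<le> (1 - q) / 2"
  shows "norm (phi11 a b q (- b * z) - 1)
     \<le> norm b * (2 * exp (norm a / (1 - q)) * (\<Sum>k. norm (phi11_term 0 0 q (norm z) (Suc k))))"
proof -
  let ?t = "phi11_term a b q (- b * z)" and ?s = "\<lambda>k. norm (phi11_term 0 0 q (norm z) (Suc k))"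
  have t: "summable (\<lambda>k. norm (?t (Suc k)))"
    using summable_norm_phi11_term[OF q] by (subst summable_Suc_iff)
  have s: "summable ?s"
    using summable_norm_phi11_term[OF q] by (subst summable_Suc_iff)
  have "phi11 a b q (- b * z) - 1 = (\<Sum>k. ?t (Suc k))"
    using suminf_split_head[OF summable_norm_cancel[OF summable_norm_phi11_term[OF q]]]
    by (simp add: phi11_eq_suminf phi11_term_0)
  then have "norm (phi11 a b q (- b * z) - 1) \<le> (\<Sum>k. norm (?t (Suc k)))"
    using summable_norm[OF t] by simp
  also have "\<dots> \<le> (\<Sum>k. norm b * (2 * exp (norm a / (1 - q))) * ?s k)"
    by (intro suminf_le t summable_mult s norm_phi11_term_le q b) simp
  also have "\<dots> = norm b * (2 * exp (norm a / (1 - q))) * (\<Sum>k. ?s k)"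
    by (rule suminf_mult[OF s])
  finally show ?thesis
    by (simp add: ac_simps)
qed

lemma phi11_tendsto_1:
  assumes q: "0 < q" "q < 1" and "b \<longlonglongrightarrow> 0"
  shows "(\<lambda>n. phi11 a (b n) q (- b n * z)) \<longlonglongrightarrow> 1"
proof -
  define C where "C = 2 * exp (norm a / (1 - q)) * (\<Sum>k. norm (phi11_term 0 0 q (norm z) (Suc k)))"
  have "(\<lambda>n. norm (b n)) \<longlonglongrightarrow> 0"
    using assms(3) by (simp add: tendsto_norm_zero)
  then have small: "eventually (\<lambda>n. norm (b n) < (1 - q) / 2) sequentially"
    by (rule order_tendstoD) (use q in simp)
  have "eventually (\<lambda>n. norm (phi11 a (b n) q (- b n * z) - 1) \<le> norm (b n) * C) sequentially"
    using small by (rule eventually_mono) (use norm_phi11_minus_1_le[OF q] in \<open>simp add: C_def\<close>)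
  moreover have "(\<lambda>n. norm (b n) * C) \<longlonglongrightarrow> 0"
    using \<open>(\<lambda>n. norm (b n)) \<longlonglongrightarrow> 0\<close> by (rule tendsto_mult_left_zero)
  ultimately have "(\<lambda>n. phi11 a (b n) q (- b n * z) - 1) \<longlonglongrightarrow> 0"
    by (rule Lim_null_comparison)
  then show ?thesis
    by (simp add: LIM_zero_iff)
qed

text \<open>The right-hand side of the theorem is \<open>phi11_scaled (q\<^sup>\<alpha>) z q (q\<^sup>\<gamma>)\<close>.\<close>
definition phi11_scaled :: "complex \<Rightarrow> complex \<Rightarrow> real \<Rightarrow> complex \<Rightarrow> complex" where
  "phi11_scaled a z q b = qpoch_inf b q / qpoch_inf ((1 - z) * b) q * phi11 a b q (- b * z)"

lemma phi11_scaled_tendsto_1: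
  assumes q: "0 < q" "q < 1" and "b \<longlonglongrightarrow> 0"
  shows "(\<lambda>n. phi11_scaled a z q (b n)) \<longlonglongrightarrow> 1"
proof -
  have "\<bar>q\<bar> < 1"
    using q by simp
  have "(\<lambda>n. (1 - z) * b n) \<longlonglongrightarrow> 0"
    using assms(3) by (rule tendsto_mult_right_zero)
  then have "(\<lambda>n. qpoch_inf (b n) q / qpoch_inf ((1 - z) * b n) q * phi11 a (b n) q (- b n * z))
      \<longlonglongrightarrow> 1 / 1 * 1"
    by (intro tendsto_mult tendsto_divide qpoch_inf_tendsto_1[OF \<open>\<bar>q\<bar> < 1\<close>] assms(3)
        phi11_tendsto_1[OF q]) simp_all
  then show ?thesis
    unfolding phi11_scaled_def by simp
qed

lemma phi11_scaled_recurrence: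
  fixes a b z :: complex and q :: real
  defines "Q \<equiv> complex_of_real q"
  assumes q: "0 < q" "q < 1" and b: "\<And>j. 1 - b * Q ^ j \<noteq> 0"
    and nonzero: "1 - (1 - z) * b \<noteq> 0" "1 - (1 - z) * (b * Q) \<noteq> 0"
  shows "phi11_scaled a z q b = phi11_scaled a z q (b * Q)
     - b * (a - b * Q) * z / ((1 - (1 - z) * b) * (1 - (1 - z) * (b * Q))) * phi11_scaled a z q (b * Q * Q)"
proof -
  have "\<bar>q\<bar> < 1"
    using q by simp
  define N where "N = qpoch_inf (b * Q * Q) q"
  define M where "M = qpoch_inf ((1 - z) * (b * Q * Q)) q"
  define \<kappa> where "\<kappa> = b * (a - b * Q) * z"
  have N1: "qpoch_inf (b * Q) q = (1 - b * Q) * N"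
    unfolding N_def Q_def by (rule qpoch_inf_unfold[OF \<open>\<bar>q\<bar> < 1\<close>])
  have N0: "qpoch_inf b q = (1 - b) * ((1 - b * Q) * N)"
    using qpoch_inf_unfold[OF \<open>\<bar>q\<bar> < 1\<close>, of b] N1 unfolding Q_def by simp
  have M1: "qpoch_inf ((1 - z) * (b * Q)) q = (1 - (1 - z) * (b * Q)) * M"
    using qpoch_inf_unfold[OF \<open>\<bar>q\<bar> < 1\<close>, of "(1 - z) * (b * Q)"] unfolding M_def Q_def
    by (simp add: mult.assoc)
  have M0: "qpoch_inf ((1 - z) * b) q = (1 - (1 - z) * b) * ((1 - (1 - z) * (b * Q)) * M)"
    using qpoch_inf_unfold[OF \<open>\<bar>q\<bar> < 1\<close>, of "(1 - z) * b"] M1 unfolding Q_def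
    by (simp add: mult.assoc)
  define \<phi>\<^sub>1 where "\<phi>\<^sub>1 = phi11 a (b * Q) q (- (b * Q) * z)"
  define \<phi>\<^sub>2 where "\<phi>\<^sub>2 = phi11 a (b * Q * Q) q (- (b * Q * Q) * z)"
  define D\<^sub>0 where "D\<^sub>0 = 1 - (1 - z) * b"
  define D\<^sub>1 where "D\<^sub>1 = 1 - (1 - z) * (b * Q)"
  have contiguous: "(1 - b) * (1 - b * Q) * phi11 a b q (- b * z)
     = D\<^sub>0 * (1 - b * Q) * \<phi>\<^sub>1 - \<kappa> * \<phi>\<^sub>2"
    using phi11_contiguous[OF q, of b a z] b
    unfolding Q_def \<kappa>_def \<phi>\<^sub>1_def \<phi>\<^sub>2_def D\<^sub>0_def by (simp add: ac_simps)
  show ?thesis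
  proof (cases "M = 0")
    case True
    \<comment> \<open>then all three values vanish, by the convention \<open>x / 0 = 0\<close>\<close>
    then show ?thesis
      by (simp add: phi11_scaled_def N0 N1 M0 M1 M_def)
  next
    case False
    have "phi11_scaled a z q b = N / (D\<^sub>0 * D\<^sub>1 * M) * ((1 - b) * (1 - b * Q) * phi11 a b q (- b * z))"
      unfolding phi11_scaled_def N0 M0 D\<^sub>0_def D\<^sub>1_def by (simp add: ac_simps)
    also have "\<dots> = (1 - b * Q) * N / (D\<^sub>1 * M) * \<phi>\<^sub>1 - \<kappa> / (D\<^sub>0 * D\<^sub>1) * (N / M * \<phi>\<^sub>2)"
      unfolding contiguous using False nonzero unfolding D\<^sub>0_def[symmetric] D\<^sub>1_def[symmetric]
      by (simp add: field_simps)
    also have "\<dots> = phi11_scaled a z q (b * Q) - \<kappa> / (D\<^sub>0 * D\<^sub>1) * phi11_scaled a z q (b * Q * Q)"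
      unfolding phi11_scaled_def N1 M1 \<phi>\<^sub>1_def \<phi>\<^sub>2_def D\<^sub>1_def N_def M_def by simp
    finally show ?thesis
      unfolding \<kappa>_def D\<^sub>0_def D\<^sub>1_def .
  qed
qed

lemma qpow_add: "qpow q (s + t) = qpow q s * qpow q t"
  by (simp add: qpow_def distrib_right exp_add)

lemma qpow_diff: "qpow q (s - t) = qpow q s / qpow q t"
  by (simp add: qpow_def exp_diff left_diff_distrib)

lemma qpow_of_nat: "0 < q \<Longrightarrow> qpow q (of_nat n) = of_real q ^ n"
  by (simp add: qpow_def exp_of_nat_mult exp_of_real)

lemma qpow_nonzero: "qpow q s \<noteq> 0"
  by (simp add: qpow_def)

definition frakF_arg :: "real \<Rightarrow> complex \<Rightarrow> complex \<Rightarrow> complex \<Rightarrow> nat \<Rightarrow> complex" where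
  "frakF_arg q \<alpha> \<gamma> z k = qpow q ((\<alpha> + \<gamma> + of_nat k) / 2 - 3 / 4)
     * qpoch_inf (qpow q (\<gamma> - \<alpha> + of_nat k)) (q ^ 2) * csqrt z
     / (qpoch_inf (qpow q (\<gamma> - \<alpha> + of_nat k + 1)) (q ^ 2) * (1 - (1 - z) * qpow q (\<gamma> + of_nat k - 1)))"

text \<open>In the product of two neighbours the infinite products telescope to a single factor and
  \<open>csqrt z\<close> appears squared, leaving the coefficient of the contiguous relation.\<close>
lemma frakF_arg_adjacent_product:
  fixes q :: real and \<alpha> \<gamma> z :: complex and n :: nat
  defines "Q \<equiv> complex_of_real q"
  defines "b \<equiv> qpow q \<gamma> * Q ^ n"
  assumes q: "0 < q" "q < 1"
    and nonzero: "\<forall>k::nat. 1 \<le> k \<longrightarrow> qpoch_inf (qpow q (\<gamma> - \<alpha> + of_nat k + 1)) (q ^ 2) \<noteq> 0"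
  shows "frakF_arg q \<alpha> \<gamma> z (Suc n) * frakF_arg q \<alpha> \<gamma> z (Suc (Suc n))
     = b * (qpow q \<alpha> - b * Q) * z / ((1 - (1 - z) * b) * (1 - (1 - z) * (b * Q)))"
proof -
  define P where "P k = qpoch_inf (qpow q (\<gamma> - \<alpha> + of_nat k)) (q ^ 2)" for k
  have frakF_arg_P: "frakF_arg q \<alpha> \<gamma> z k = qpow q ((\<alpha> + \<gamma> + of_nat k) / 2 - 3 / 4) * P k * csqrt z
     / (P (Suc k) * (1 - (1 - z) * qpow q (\<gamma> + of_nat k - 1)))" for k
    unfolding frakF_arg_def P_def by (simp add: ac_simps)
  have P_nonzero: "P (Suc (Suc n)) \<noteq> 0" "P (Suc (Suc (Suc n))) \<noteq> 0"
    using nonzero[rule_format, of "Suc n"] nonzero[rule_format, of "Suc (Suc n)"]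
    unfolding P_def by (simp_all add: add.assoc)
  have "\<bar>q ^ 2\<bar> < 1"
    using q by (simp add: abs_square_less_1)
  have "qpow q (\<gamma> - \<alpha> + of_nat (Suc (Suc (Suc n)))) = qpow q (\<gamma> - \<alpha> + of_nat (Suc n) + of_nat 2)"
    by (simp add: algebra_simps)
  also have "\<dots> = qpow q (\<gamma> - \<alpha> + of_nat (Suc n)) * of_real (q ^ 2)"
    unfolding qpow_add[of q _ "of_nat 2"] qpow_of_nat[OF q(1)] by simp
  finally have "P (Suc n) = (1 - qpow q (\<gamma> - \<alpha> + of_nat (Suc n))) * P (Suc (Suc (Suc n)))"
    using qpoch_inf_unfold[OF \<open>\<bar>q ^ 2\<bar> < 1\<close>, of "qpow q (\<gamma> - \<alpha> + of_nat (Suc n))"]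
    unfolding P_def by simp
  moreover have "qpow q (\<gamma> - \<alpha> + of_nat (Suc n)) = b * Q / qpow q \<alpha>"
    unfolding b_def Q_def qpow_add qpow_diff qpow_of_nat[OF q(1)] by simp
  ultimately have P_Suc: "P (Suc n) = (1 - b * Q / qpow q \<alpha>) * P (Suc (Suc (Suc n)))"
    by simp
  have exponents: "qpow q ((\<alpha> + \<gamma> + of_nat (Suc n)) / 2 - 3 / 4) * qpow q ((\<alpha> + \<gamma> + of_nat (Suc (Suc n))) / 2 - 3 / 4)
      = qpow q \<alpha> * b"
  proof -
    have "(\<alpha> + \<gamma> + of_nat (Suc n)) / 2 - 3 / 4 + ((\<alpha> + \<gamma> + of_nat (Suc (Suc n))) / 2 - 3 / 4) = \<alpha> + (\<gamma> + of_nat n)"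
      by (simp add: field_simps)
    then show ?thesis
      unfolding b_def Q_def by (simp add: qpow_add[symmetric] qpow_add qpow_of_nat[OF q(1)])
  qed

  have denominators: "qpow q (\<gamma> + of_nat (Suc n) - 1) = b" "qpow q (\<gamma> + of_nat (Suc (Suc n)) - 1) = b * Q"
    using qpow_of_nat[OF q(1), of 1]
    unfolding b_def Q_def by (simp_all add: qpow_add qpow_diff qpow_of_nat[OF q(1)])
  define E\<^sub>1 E\<^sub>2 D\<^sub>0 D\<^sub>1 where "E\<^sub>1 = qpow q ((\<alpha> + \<gamma> + of_nat (Suc n)) / 2 - 3 / 4)"
    and "E\<^sub>2 = qpow q ((\<alpha> + \<gamma> + of_nat (Suc (Suc n))) / 2 - 3 / 4)"
    and "D\<^sub>0 = 1 - (1 - z) * b" and "D\<^sub>1 = 1 - (1 - z) * (b * Q)"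
  have "frakF_arg q \<alpha> \<gamma> z (Suc n) * frakF_arg q \<alpha> \<gamma> z (Suc (Suc n))
      = (E\<^sub>1 * E\<^sub>2) * (csqrt z * csqrt z) * (P (Suc n) / P (Suc (Suc (Suc n)))) / (D\<^sub>0 * D\<^sub>1)"
    unfolding frakF_arg_P denominators E\<^sub>1_def[symmetric] E\<^sub>2_def[symmetric] D\<^sub>0_def[symmetric] D\<^sub>1_def[symmetric]
    using P_nonzero by (simp add: field_simps)
  also have "\<dots> = qpow q \<alpha> * b * z * (1 - b * Q / qpow q \<alpha>) / (D\<^sub>0 * D\<^sub>1)"
    unfolding E\<^sub>1_def E\<^sub>2_def exponents P_Suc using P_nonzero power2_csqrt[of z]
    by (simp add: power2_eq_square)
  also have "qpow q \<alpha> * b * z * (1 - b * Q / qpow q \<alpha>) = b * (qpow q \<alpha> - b * Q) * z"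
    using qpow_nonzero[of q \<alpha>] by (simp add: field_simps)
  finally show ?thesis
    unfolding D\<^sub>0_def D\<^sub>1_def .
qed

lemma summable_norm_power_mult_convergent:
  fixes r :: "'a::real_normed_field"
  assumes "norm r < 1" "convergent h"
  shows "summable (\<lambda>n. norm (r ^ n * h n))"
proof -
  obtain K where "\<And>n. norm (h n) \<le> K"
    using convergent_imp_Bseq[OF assms(2)] by (auto simp: Bseq_def)
  then have bound: "norm (norm (r ^ n * h n)) \<le> norm r ^ n * K" for n
    by (simp add: norm_mult norm_power mult_left_mono)
  have "summable (\<lambda>n. norm r ^ n * K)"
    using assms(1) by (intro summable_mult2 summable_geometric) simp
  then show ?thesis
    by (rule summable_comparison_test') (rule bound)
qed

lemma adjacent_summable_frakF_arg:
  assumes q: "0 < q" "q < 1"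
    and nonzero: "\<forall>k::nat. 1 \<le> k \<longrightarrow> qpoch_inf (qpow q (\<gamma> - \<alpha> + of_nat k + 1)) (q ^ 2) \<noteq> 0"
  shows "adjacent_summable (frakF_arg q \<alpha> \<gamma> z)"
proof -
  define Q where "Q = complex_of_real q"
  define b where "b n = qpow q \<gamma> * Q ^ n" for n
  define h where "h n = qpow q \<gamma> * (qpow q \<alpha> - b n * Q) * z
    / ((1 - (1 - z) * b n) * (1 - (1 - z) * (b n * Q)))" for n
  have "frakF_arg q \<alpha> \<gamma> z (Suc n) * frakF_arg q \<alpha> \<gamma> z (Suc (Suc n)) = Q ^ n * h n" for n
    unfolding frakF_arg_adjacent_product[OF q nonzero, where n=n and z=z] h_def b_def Q_def
    by (simp add: ac_simps)
  moreover have "(\<lambda>n. Q ^ n) \<longlonglongrightarrow> 0"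
    using q by (simp add: Q_def LIMSEQ_power_zero)
  then have "b \<longlonglongrightarrow> 0"
    unfolding b_def[abs_def] by (rule tendsto_mult_right_zero)
  then have "h \<longlonglongrightarrow> qpow q \<gamma> * (qpow q \<alpha> - 0 * Q) * z / ((1 - (1 - z) * 0) * (1 - (1 - z) * (0 * Q)))"
    unfolding h_def[abs_def] by (intro tendsto_intros) simp_all
  then have "convergent h"
    by (rule convergentI)
  then have "summable (\<lambda>n. norm (Q ^ n * h n))"
    using q by (intro summable_norm_power_mult_convergent) (simp_all add: Q_def)
  ultimately show ?thesis
    by (subst summable_Suc_iff[symmetric]) simp
qed

theorem mainTheorem13:
  fixes q :: real and \<alpha> \<gamma> z :: complex
  assumes "0 < q" and "q < 1"
    and "\<forall>k::nat. 1 \<le> k \<longrightarrow> qpoch_inf (qpow q (\<gamma> - \<alpha> + of_nat k + 1)) (q ^ 2) \<noteq> 0"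
    and "\<forall>k::nat. 1 \<le> k \<longrightarrow> 1 - (1 - z) * qpow q (\<gamma> + of_nat k - 1) \<noteq> 0"
    and "\<forall>k. qpoch (qpow q \<gamma>) q k \<noteq> 0"
  shows "frakF (\<lambda>k. qpow q ((\<alpha> + \<gamma> + of_nat k) / 2 - 3 / 4)
              * qpoch_inf (qpow q (\<gamma> - \<alpha> + of_nat k)) (q ^ 2) * csqrt z
            / (qpoch_inf (qpow q (\<gamma> - \<alpha> + of_nat k + 1)) (q ^ 2)
               * (1 - (1 - z) * qpow q (\<gamma> + of_nat k - 1))))
       = qpoch_inf (qpow q \<gamma>) q / qpoch_inf ((1 - z) * qpow q \<gamma>) q
         * phi11 (qpow q \<alpha>) (qpow q \<gamma>) q (- qpow q \<gamma> * z)"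
proof -
  note q = assms(1,2)
  define Q where "Q = complex_of_real q"
  define b where "b n = qpow q \<gamma> * Q ^ n" for n
  have b_Suc: "b (Suc n) = b n * Q" for n
    by (simp add: b_def)
  have denominator: "1 - (1 - z) * b n \<noteq> 0" for n
    using assms(4)[rule_format, of "Suc n"]
    by (simp add: b_def Q_def qpow_add qpow_diff qpow_of_nat[OF q(1)] qpow_of_nat[OF q(1), of 1, simplified])
  have "1 - b n * Q ^ j \<noteq> 0" for n j
    using assms(5)[rule_format, of "Suc (n + j)"] by (simp add: qpoch_Suc b_def Q_def power_add mult.assoc)
  then have "phi11_scaled (qpow q \<alpha>) z q (b n) = phi11_scaled (qpow q \<alpha>) z q (b n * Q)
      - b n * (qpow q \<alpha> - b n * Q) * z / ((1 - (1 - z) * b n) * (1 - (1 - z) * (b n * Q)))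
        * phi11_scaled (qpow q \<alpha>) z q (b n * Q * Q)" for n
    unfolding Q_def by (rule phi11_scaled_recurrence[OF q])
      (use denominator[of n] denominator[of "Suc n"] in \<open>simp_all add: b_Suc Q_def\<close>)
  then have "phi11_scaled (qpow q \<alpha>) z q (b n) = phi11_scaled (qpow q \<alpha>) z q (b (Suc n))
      - frakF_arg q \<alpha> \<gamma> z (Suc n) * frakF_arg q \<alpha> \<gamma> z (Suc (Suc n)) * phi11_scaled (qpow q \<alpha>) z q (b (Suc (Suc n)))" for n
    unfolding b_Suc frakF_arg_adjacent_product[OF q assms(3), where n=n and z=z] unfolding b_def Q_def .
  moreover have "b \<longlonglongrightarrow> 0"
    using q unfolding b_def[abs_def] Q_def by (intro tendsto_mult_right_zero LIMSEQ_power_zero) simp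
  ultimately have "frakF (frakF_arg q \<alpha> \<gamma> z) = phi11_scaled (qpow q \<alpha>) z q (b 0)"
    by (intro frakF_eq_of_recurrence adjacent_summable_frakF_arg phi11_scaled_tendsto_1 q assms(3))
  then show ?thesis
    by (simp add: frakF_arg_def[abs_def] phi11_scaled_def b_def)
qed

end
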